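(* Let $d\ge2$ be fixed, $c_0$ a constant (e.g. $c_0=100d$), and $c,c_1>0$ fixed constants. Define $R^2=2\log n+\log((\log n)^{c_0})$, $\rho^2=2\log n-\log\log n+\log\big((c\log\log n)^{-2}\big)$, and $r=\rho-5c_1^2/\rho$. Let $y_1,\dots,y_m$ be a system of points on the sphere $S(\rho)$ of radius $\rho$ about the origin that is maximal with respect to the property $|y_i-y_j|\ge2c_1$ for $i\ne j$. Let $V_i=\{x:\ |x-y_i|\le|x-y_j|\text{ for all }j\}$ be the Voronoi region of $y_i$, let $A(R,r)=B(R)\setminus B(r)$, and let $W_i=V_i\cap A(R,r)$. Define the graph $G$ on vertex set $\{1,\dots,m\}$ in which $i\neq j$ are adjacent if and only if there exist $a_i\in W_i$, $a_j\in W_j$ and $b\in A(R,r)$ such that the segments $[a_i,b]$ and $[b,a_j]$ lie entirely in $A(R,r)$. Then the maximal degree $D$ of $G$ satisfies $D=O\big((\log\log n)^{\frac{d-1}{2}}\big)$ as $n\to\infty$.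
   Context: $B(x)$ denotes the closed ball of radius $x$ centered at the origin. $f(n)=O(g(n))$ means $f(n)\le Cg(n)$ for a constant $C$ independent of $n$ and all large $n$. *)

theory Defs
  imports "HOL-Analysis.Analysis"
begin

definition R_rad :: "real \<Rightarrow> nat \<Rightarrow> real" where
  "R_rad c0 n = sqrt (2 * ln (real n) + ln ((ln (real n)) powr c0))"

definition rho_rad :: "real \<Rightarrow> nat \<Rightarrow> real" where
  "rho_rad c n = sqrt (2 * ln (real n) - ln (ln (real n))
                      + ln (inverse ((c * ln (ln (real n)))^2)))"

definition r_rad :: "real \<Rightarrow> real \<Rightarrow> nat \<Rightarrow> real" where
  "r_rad c c1 n = rho_rad c n - 5 * c1^2 / rho_rad c n"

definition annulus :: "real \<Rightarrow> real \<Rightarrow> ('a::real_normed_vector) set" where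
  "annulus R r = cball 0 R - cball 0 r"

definition voronoi :: "('a::metric_space) set \<Rightarrow> 'a \<Rightarrow> 'a set" where
  "voronoi Y y = {x. \<forall>z\<in>Y. dist x y \<le> dist x z}"

definition maximal_separated :: "real \<Rightarrow> real \<Rightarrow> ('a::real_normed_vector) set \<Rightarrow> bool" where
  "maximal_separated \<rho> \<delta> Y \<longleftrightarrow>
     Y \<subseteq> sphere 0 \<rho> \<and>
     (\<forall>y\<in>Y. \<forall>z\<in>Y. y \<noteq> z \<longrightarrow> dist y z \<ge> \<delta>) \<and>
     (\<forall>p\<in>sphere 0 \<rho>. p \<notin> Y \<longrightarrow> (\<exists>y\<in>Y. dist p y < \<delta>))"

definition adjacent :: "('a::euclidean_space) set \<Rightarrow> 'a set \<Rightarrow> 'a \<Rightarrow> 'a \<Rightarrow> bool" where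
  "adjacent A Y y z \<longleftrightarrow> y \<noteq> z \<and>
     (\<exists>a\<in>voronoi Y y \<inter> A. \<exists>a'\<in>voronoi Y z \<inter> A. \<exists>b\<in>A.
        closed_segment a b \<subseteq> A \<and> closed_segment b a' \<subseteq> A)"

definition degree :: "('a::euclidean_space) set \<Rightarrow> 'a set \<Rightarrow> 'a \<Rightarrow> nat" where
  "degree A Y y = card {z\<in>Y. adjacent A Y y z}"

end

theory Submission
  imports Defs "HOL-Real_Asymp.Real_Asymp"
begin

text \<open>
  Neighbouring cells have nearby centres. A chord of the annulus A(R,r) has length at most
  2 sqrt(R^2 - r^2), since its midpoint lies outside B(r); and by maximality of the packing every
  point of W_i lies within (R - r) + (\<rho> - r) + 2c_1 of y_i. For the given radii
  R^2 - r^2 = O(log log n) and \<rho> - r = O(1), so all neighbours of y_i lie in a ball of radius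
  L = O(sqrt(log log n)) around it. Finally, a 2c_1-separated set on the sphere S(\<rho>) meets such a
  ball, with L small compared to \<rho>, in O(L^(d-1)) points: forgetting the coordinate k in which
  y_i is largest is injective at mesh of order c_1, because on the sphere, near y_i, the k-th
  coordinate is determined by the other ones up to a comparable error.
\<close>

lemma parallelogram_law:
  fixes a b :: "'a::real_inner"
  shows "norm (a - b)^2 + norm (a + b)^2 = 2 * norm a^2 + 2 * norm b^2"
  by (simp add: power2_norm_eq_inner inner_diff_left inner_diff_right inner_add_left
      inner_add_right inner_commute)

lemma dist_le_if_closed_segment_subset_annulus:
  fixes a b :: "'a::real_inner"
  assumes "closed_segment a b \<subseteq> annulus R r" and "0 \<le> r"
  shows "dist a b \<le> 2 * sqrt (R^2 - r^2)"
proof -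
  have "a \<in> annulus R r" "b \<in> annulus R r" "midpoint a b \<in> annulus R r"
    using assms(1) ends_in_segment midpoint_in_closed_segment by blast+
  then have ab: "norm a \<le> R" "norm b \<le> R" and mid: "r < norm (midpoint a b)"
    by (auto simp: annulus_def)
  have "norm (a + b) = 2 * norm (midpoint a b)"
    by (simp add: midpoint_def)
  with mid assms(2) have "(2 * r)^2 \<le> norm (a + b)^2"
    by (intro power_mono) auto
  moreover have "norm a^2 \<le> R^2" "norm b^2 \<le> R^2"
    using ab by (auto intro!: power_mono)
  ultimately have "norm (a - b)^2 \<le> 4 * (R^2 - r^2)"
    using parallelogram_law[of a b] by (simp add: power_mult_distrib)
  then have "norm (a - b) \<le> sqrt 4 * sqrt (R^2 - r^2)"
    unfolding real_sqrt_mult[symmetric] by (rule real_le_rsqrt)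
  then show ?thesis
    by (simp add: dist_norm)
qed

lemma dist_le_if_voronoi_annulus:
  fixes a y :: "'a::real_normed_vector"
  assumes "maximal_separated \<rho> \<delta> Y" and "a \<in> voronoi Y y \<inter> annulus R r"
    and "0 \<le> r" and "r \<le> \<rho>" and "0 \<le> \<delta>"
  shows "dist a y \<le> (R - r) + (\<rho> - r) + \<delta>"
proof -
  have a: "r < norm a" "norm a \<le> R"
    using assms(2) by (auto simp: annulus_def)
  then have "a \<noteq> 0"
    using assms(3) by auto
  define p where "p = (\<rho> / norm a) *\<^sub>R a"
  have "p \<in> sphere 0 \<rho>"
    using \<open>a \<noteq> 0\<close> a assms(3,4) by (simp add: p_def)
  then obtain y' where "y' \<in> Y" and "dist p y' \<le> \<delta>"
    using assms(1,5) unfolding maximal_separated_def by (smt (verit) dist_self)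
  have "a - p = (1 - \<rho> / norm a) *\<^sub>R a"
    by (simp add: p_def algebra_simps)
  also have "norm \<dots> = \<bar>(1 - \<rho> / norm a) * norm a\<bar>"
    by (simp add: abs_mult)
  also have "(1 - \<rho> / norm a) * norm a = norm a - \<rho>"
    using \<open>a \<noteq> 0\<close> by (simp add: field_simps)
  finally have "dist a p = \<bar>norm a - \<rho>\<bar>"
    by (simp add: dist_norm)
  have "dist a y \<le> dist a y'"
    using assms(2) \<open>y' \<in> Y\<close> by (auto simp: voronoi_def)
  also have "\<dots> \<le> dist a p + dist p y'"
    by (rule dist_triangle)
  also have "\<dots> \<le> (R - r) + (\<rho> - r) + \<delta>"
    using \<open>dist a p = _\<close> \<open>dist p y' \<le> \<delta>\<close> a assms(3,4) by linarith
  finally show ?thesis .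
qed

lemma dist_le_if_adjacent_annulus:
  fixes y z :: "'a::euclidean_space"
  assumes "maximal_separated \<rho> \<delta> Y" and "adjacent (annulus R r) Y y z"
    and "0 \<le> r" and "r \<le> \<rho>" and "0 \<le> \<delta>"
  shows "dist y z \<le> 6 * sqrt (R^2 - r^2) + 2 * (\<rho> - r) + 2 * \<delta>"
proof -
  obtain a a' b where a: "a \<in> voronoi Y y \<inter> annulus R r" and a': "a' \<in> voronoi Y z \<inter> annulus R r"
    and ab: "closed_segment a b \<subseteq> annulus R r" and ba': "closed_segment b a' \<subseteq> annulus R r"
    using assms(2) unfolding adjacent_def by blast
  have "r < R"
    using a by (auto simp: annulus_def)
  then have "(R - r)^2 \<le> R^2 - r^2"
    using assms(3) by (simp add: power2_eq_square algebra_simps mult_right_mono)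
  then have "R - r \<le> sqrt (R^2 - r^2)"
    by (rule real_le_rsqrt)
  moreover have "dist a y \<le> (R - r) + (\<rho> - r) + \<delta>" "dist a' z \<le> (R - r) + (\<rho> - r) + \<delta>"
    using dist_le_if_voronoi_annulus[OF assms(1)] a a' assms(3-5) by auto
  moreover have "dist a b \<le> 2 * sqrt (R^2 - r^2)" "dist b a' \<le> 2 * sqrt (R^2 - r^2)"
    using dist_le_if_closed_segment_subset_annulus ab ba' assms(3) by auto
  moreover have "dist y z \<le> dist y a + dist a b + dist b a' + dist a' z"
    using dist_triangle[of y z a] dist_triangle[of a z b] dist_triangle[of b z a'] by linarith
  ultimately show ?thesis
    by (simp add: dist_commute)
qed

lemma degree_annulus_le_card_near:
  assumes "finite Y" and "maximal_separated \<rho> \<delta> Y"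
    and "0 \<le> r" and "r \<le> \<rho>" and "0 \<le> \<delta>"
    and "6 * sqrt (R^2 - r^2) + 2 * (\<rho> - r) + 2 * \<delta> \<le> L"
  shows "degree (annulus R r) Y y \<le> card {z\<in>Y. dist y z \<le> L}"
  unfolding degree_def using assms dist_le_if_adjacent_annulus[OF assms(2) _ assms(3-5)]
  by (intro card_mono) force+

lemma card_le_if_projection_separated:
  fixes S :: "(real^'d) set" and y :: "real^'d"
  assumes "0 < s" and "0 \<le> L"
    and near: "\<And>z j. z \<in> S \<Longrightarrow> \<bar>z$j - y$j\<bar> \<le> L"
    and separated: "\<And>z w. z \<in> S \<Longrightarrow> w \<in> S \<Longrightarrow> \<forall>j. j \<noteq> k \<longrightarrow> \<bar>z$j - w$j\<bar> < s \<Longrightarrow> z = w"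
  shows "real (card S) \<le> (2 * L / s + 3) ^ (CARD('d) - 1)"
proof -
  define M where "M = \<lceil>L / s\<rceil>"
  define B :: "'d \<Rightarrow> int set" where "B j = (if j = k then {0} else {-M..M})" for j
  define g :: "real^'d \<Rightarrow> 'd \<Rightarrow> int" where
    "g z j = (if j = k then 0 else \<lfloor>(z$j - y$j) / s\<rfloor>)" for z j
  have "L \<le> of_int M * s"
    using \<open>0 < s\<close> by (metis M_def le_of_int_ceiling pos_divide_le_eq)
  then have "g z j \<in> B j" if "z \<in> S" for z j
    using near[OF that, of j] \<open>0 < s\<close>
    by (auto simp: g_def B_def le_floor_iff floor_le_iff le_divide_eq divide_less_eq abs_le_iff
        distrib_right)
  then have "g ` S \<subseteq> PiE UNIV B"
    by (auto simp: PiE_iff)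
  moreover have "inj_on g S"
  proof (rule inj_onI)
    fix z w assume "z \<in> S" "w \<in> S" "g z = g w"
    have "\<bar>z$j - w$j\<bar> < s" if "j \<noteq> k" for j
    proof -
      have "\<lfloor>(z$j - y$j) / s\<rfloor> = \<lfloor>(w$j - y$j) / s\<rfloor>"
        using fun_cong[OF \<open>g z = g w\<close>, of j] that by (simp add: g_def)
      then have "\<bar>(z$j - y$j) / s - (w$j - y$j) / s\<bar> < 1"
        by (rule floor_eq_imp_diff_1)
      then show ?thesis
        using \<open>0 < s\<close> by (simp add: diff_divide_distrib[symmetric] divide_less_eq)
    qed
    then show "z = w"
      using separated \<open>z \<in> S\<close> \<open>w \<in> S\<close> by blast
  qed
  ultimately have "card S \<le> card (PiE (UNIV::'d set) B)"
    by (intro card_inj_on_le) (auto simp: B_def intro!: finite_PiE)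
  also have "\<dots> = card (B k) * (\<Prod>j\<in>UNIV - {k}. card (B j))"
    by (simp add: card_PiE prod.remove[of UNIV k])
  also have "\<dots> = nat (2 * M + 1) ^ (CARD('d) - 1)"
    by (simp add: B_def card_Diff_subset)
  finally have "real (card S) \<le> real (nat (2 * M + 1)) ^ (CARD('d) - 1)"
    by (metis of_nat_le_iff of_nat_power)
  also have "\<dots> \<le> (2 * L / s + 3) ^ (CARD('d) - 1)"
  proof (rule power_mono)
    have "0 \<le> M"
      unfolding M_def zero_le_ceiling using divide_nonneg_pos[OF assms(2,1)] by linarith
    then show "real (nat (2 * M + 1)) \<le> 2 * L / s + 3"
      unfolding M_def by simp linarith
  qed simp
  finally show ?thesis .
qed

lemma norm_sq_eq_sum_components_sq: "norm (x::real^'d)^2 = (\<Sum>j\<in>UNIV. (x$j)^2)"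
  unfolding power2_norm_eq_inner inner_vec_def by (simp add: power2_eq_square)

lemma dist_le_if_coordinates_close_on_sphere:
  fixes z w :: "real^'d"
  assumes "norm z = \<rho>" and "norm w = \<rho>" and "0 < t" and "t \<le> \<bar>z$k + w$k\<bar>"
    and "0 \<le> s" and close: "\<And>j. j \<noteq> k \<Longrightarrow> \<bar>z$j - w$j\<bar> \<le> s"
  shows "dist z w \<le> (2 * \<rho> / t + 1) * CARD('d) * s"
proof -
  let ?J = "UNIV - {k}"
  have card_J: "real (card ?J) \<le> CARD('d)"
    by (simp add: card_Diff_subset)
  have "(z$k)^2 - (w$k)^2 = (\<Sum>j\<in>?J. (w$j)^2 - (z$j)^2)"
    using norm_sq_eq_sum_components_sq[of z] norm_sq_eq_sum_components_sq[of w] assms(1,2)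
    by (simp add: sum.remove[of UNIV k] sum_subtractf)
  then have "\<bar>z$k - w$k\<bar> * \<bar>z$k + w$k\<bar> = \<bar>\<Sum>j\<in>?J. (w$j)^2 - (z$j)^2\<bar>"
    by (simp add: abs_mult[symmetric] power2_eq_square algebra_simps)
  also have "\<dots> \<le> (\<Sum>j\<in>?J. \<bar>(w$j)^2 - (z$j)^2\<bar>)"
    by (rule sum_abs)
  also have "\<dots> = (\<Sum>j\<in>?J. \<bar>w$j - z$j\<bar> * \<bar>w$j + z$j\<bar>)"
    by (simp add: abs_mult[symmetric] power2_eq_square algebra_simps)
  also have "\<dots> \<le> (\<Sum>j\<in>?J. s * (2 * \<rho>))"
  proof (rule sum_mono)
    fix j assume "j \<in> ?J"
    have "\<bar>w$j + z$j\<bar> \<le> 2 * \<rho>"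
      using component_le_norm_cart[of w j] component_le_norm_cart[of z j] assms(1,2) by linarith
    moreover have "\<bar>w$j - z$j\<bar> \<le> s"
      using close[of j] \<open>j \<in> ?J\<close> by (simp add: abs_minus_commute)
    ultimately show "\<bar>w$j - z$j\<bar> * \<bar>w$j + z$j\<bar> \<le> s * (2 * \<rho>)"
      by (intro mult_mono) auto
  qed
  also have "\<dots> \<le> CARD('d) * s * (2 * \<rho>)"
    using assms(1,5) norm_ge_zero[of z] by (simp add: card_Diff_subset algebra_simps)
  finally have "\<bar>z$k - w$k\<bar> * t \<le> CARD('d) * s * (2 * \<rho>)"
    using assms(4) by (meson abs_ge_zero mult_left_mono order_trans)
  then have zwk: "\<bar>z$k - w$k\<bar> \<le> 2 * \<rho> / t * CARD('d) * s"
    using \<open>0 < t\<close> by (simp add: field_simps)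
  have "dist z w \<le> (\<Sum>j\<in>UNIV. \<bar>(z - w)$j\<bar>)"
    unfolding dist_norm by (rule norm_le_l1_cart)
  also have "\<dots> = \<bar>z$k - w$k\<bar> + (\<Sum>j\<in>?J. \<bar>z$j - w$j\<bar>)"
    by (simp add: sum.remove[of UNIV k])
  also have "\<dots> \<le> 2 * \<rho> / t * CARD('d) * s + (\<Sum>j\<in>?J. s)"
    using zwk close by (intro add_mono sum_mono) auto
  also have "\<dots> \<le> (2 * \<rho> / t + 1) * CARD('d) * s"
    using card_J \<open>0 \<le> s\<close> by (simp add: algebra_simps mult_right_mono)
  finally show ?thesis .
qed

lemma card_separated_on_sphere_near_le:
  fixes Y :: "(real^'d) set" and y :: "real^'d" and \<rho> \<delta> L :: real
  assumes "Y \<subseteq> sphere 0 \<rho>"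
    and separated: "\<And>u v. u \<in> Y \<Longrightarrow> v \<in> Y \<Longrightarrow> u \<noteq> v \<Longrightarrow> \<delta> \<le> dist u v"
    and "0 < \<delta>" and "norm y = \<rho>" and "0 < \<rho>" and "0 \<le> L" and "2 * real CARD('d) * L \<le> \<rho>"
  shows "real (card {z\<in>Y. dist y z \<le> L})
           \<le> (8 * real CARD('d)^2 * L / \<delta> + 3) ^ (CARD('d) - 1)"
proof -
  define d where "d = real CARD('d)"
  have "d \<ge> 1"
    by (simp add: d_def)
  have "Max (range (\<lambda>j. \<bar>y$j\<bar>)) \<in> range (\<lambda>j. \<bar>y$j\<bar>)"
    by (rule Max_in) auto
  then obtain k where k_max: "\<bar>y$k\<bar> = Max (range (\<lambda>j. \<bar>y$j\<bar>))"
    by (metis imageE)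
  have k: "\<bar>y$j\<bar> \<le> \<bar>y$k\<bar>" for j
    unfolding k_max by (rule Max_ge) auto
  have "\<rho> \<le> (\<Sum>j\<in>UNIV. \<bar>y$j\<bar>)"
    using norm_le_l1_cart[of y] assms(4) by simp
  also have "\<dots> \<le> d * \<bar>y$k\<bar>"
    using sum_mono[of UNIV "\<lambda>j. \<bar>y$j\<bar>" "\<lambda>_. \<bar>y$k\<bar>"] k by (simp add: d_def)
  finally have yk: "\<rho> \<le> d * \<bar>y$k\<bar>" .
  then have "0 < \<bar>y$k\<bar>"
    using assms(5) \<open>d \<ge> 1\<close> by (auto simp: zero_less_mult_iff)
  have "d * (2 * L) \<le> d * \<bar>y$k\<bar>"
    using yk assms(7) unfolding d_def by linarith
  then have "2 * L \<le> \<bar>y$k\<bar>"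
    using \<open>d \<ge> 1\<close> mult_strict_left_mono[of "\<bar>y$k\<bar>" "2 * L" d] by linarith
  define S where "S = {z\<in>Y. dist y z \<le> L}"
  have near: "\<bar>z$j - y$j\<bar> \<le> L" if "z \<in> S" for z j
    using component_le_norm_cart[of "z - y" j] that by (simp add: S_def dist_norm norm_minus_commute)
  define s where "s = \<delta> / (4 * d^2)"
  have "0 < s"
    using assms(3) \<open>d \<ge> 1\<close> by (simp add: s_def)
  have "z = w" if "z \<in> S" "w \<in> S" "\<forall>j. j \<noteq> k \<longrightarrow> \<bar>z$j - w$j\<bar> < s" for z w
  proof -
    have "\<bar>y$k\<bar> \<le> \<bar>z$k + w$k\<bar>"
      using near[OF that(1), of k] near[OF that(2), of k] \<open>2 * L \<le> \<bar>y$k\<bar>\<close> by linarith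
    moreover have "norm z = \<rho>" "norm w = \<rho>"
      using that(1,2) assms(1) by (auto simp: S_def)
    ultimately have "dist z w \<le> (2 * \<rho> / \<bar>y$k\<bar> + 1) * d * s"
      unfolding d_def using that(3) \<open>0 < \<bar>y$k\<bar>\<close> \<open>0 < s\<close>
      by (intro dist_le_if_coordinates_close_on_sphere) auto
    also have "\<dots> \<le> (2 * d + 1) * d * s"
      using yk \<open>0 < \<bar>y$k\<bar>\<close> \<open>0 < s\<close> \<open>d \<ge> 1\<close>
      by (intro mult_right_mono) (auto simp: divide_le_eq)
    also have "\<dots> < \<delta>"
      using \<open>0 < s\<close> \<open>d \<ge> 1\<close> by (simp add: s_def power2_eq_square field_simps)
    finally show "z = w"
      using separated that(1,2) by (force simp: S_def)
  qed
  then have "real (card S) \<le> (2 * L / s + 3) ^ (CARD('d) - 1)"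
    using card_le_if_projection_separated[OF \<open>0 < s\<close> \<open>0 \<le> L\<close> near] by blast
  also have "2 * L / s = 8 * CARD('d)^2 * L / \<delta>"
    using assms(3) by (simp add: s_def d_def)
  finally show ?thesis
    by (simp add: S_def)
qed

lemma degree_annulus_le:
  fixes Y :: "(real^'d) set" and \<rho> \<delta> L :: real
  assumes "finite Y" and "maximal_separated \<rho> \<delta> Y" and "y \<in> Y"
    and "0 < \<delta>" and "0 < \<rho>" and "0 \<le> r" and "r \<le> \<rho>" and "0 \<le> L"
    and "6 * sqrt (R^2 - r^2) + 2 * (\<rho> - r) + 2 * \<delta> \<le> L" and "2 * real CARD('d) * L \<le> \<rho>"
  shows "real (degree (annulus R r) Y y) \<le> (8 * real CARD('d)^2 * L / \<delta> + 3) ^ (CARD('d) - 1)"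
proof -
  have "degree (annulus R r) Y y \<le> card {z\<in>Y. dist y z \<le> L}"
    using assms by (intro degree_annulus_le_card_near) auto
  also have "real \<dots> \<le> (8 * real CARD('d)^2 * L / \<delta> + 3) ^ (CARD('d) - 1)"
    using assms by (intro card_separated_on_sphere_near_le) (auto simp: maximal_separated_def)
  finally show ?thesis
    by simp
qed

lemma shifted_radius_bounds:
  fixes \<rho> a :: real
  assumes "1 \<le> \<rho>" and "0 \<le> a" and "a \<le> \<rho>^2"
  shows "0 \<le> \<rho> - a / \<rho>" and "\<rho> - a / \<rho> \<le> \<rho>" and "\<rho> - (\<rho> - a / \<rho>) \<le> a"
    and "\<rho>^2 - 2 * a \<le> (\<rho> - a / \<rho>)^2"
proof -
  show "0 \<le> \<rho> - a / \<rho>" "\<rho> - a / \<rho> \<le> \<rho>" "\<rho> - (\<rho> - a / \<rho>) \<le> a"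
    using assms by (auto simp: divide_le_eq power2_eq_square mult_le_cancel_left1)
  have "(\<rho> - a / \<rho>)^2 = \<rho>^2 - 2 * a + (a / \<rho>)^2"
    using assms(1) by (simp add: power2_diff)
  then show "\<rho>^2 - 2 * a \<le> (\<rho> - a / \<rho>)^2"
    by simp
qed

lemma sqrt_le_rho_rad:
  fixes c :: real
  assumes "0 < c" and "1 \<le> ln (ln (real n))" and "(1 + 2 * c) * ln (ln (real n)) \<le> ln (real n)"
  shows "sqrt (2 * ln (real n) - (1 + 2 * c) * ln (ln (real n))) \<le> rho_rad c n"
proof -
  define l where "l = ln (ln (real n))"
  have "ln (c * l) \<le> c * l"
    using ln_le_minus_one[of "c * l"] assms(1,2) by (simp add: l_def)
  moreover have "ln (inverse ((c * l)^2)) = - 2 * ln (c * l)"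
    using assms(1,2) by (simp add: ln_inverse ln_realpow l_def)
  ultimately show ?thesis
    unfolding rho_rad_def l_def[symmetric] by (simp add: algebra_simps)
qed

lemma R_rad_sq:
  assumes "0 \<le> 2 * ln (real n) + c0 * ln (ln (real n))"
  shows "R_rad c0 n ^ 2 = 2 * ln (real n) + c0 * ln (ln (real n))"
  using assms by (simp add: R_rad_def)

lemma annulus_radii_estimates:
  fixes c0 c c1 :: real and n :: nat
  defines "l \<equiv> ln (ln (real n))"
  assumes "0 < c" and "1 \<le> l" and "(1 + 2 * c) * l \<le> ln (real n)"
    and "\<bar>c0\<bar> * l \<le> ln (real n)" and "5 * c1^2 \<le> ln (real n)"
  shows "ln (real n) \<le> rho_rad c n ^ 2" and "1 \<le> rho_rad c n"
    and "0 \<le> r_rad c c1 n" and "r_rad c c1 n \<le> rho_rad c n"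
    and "rho_rad c n - r_rad c c1 n \<le> 5 * c1^2"
    and "R_rad c0 n ^ 2 - r_rad c c1 n ^ 2 \<le> (\<bar>c0\<bar> + 1 + 2 * c + 10 * c1^2) * l"
proof -
  have "1 \<le> (1 + 2 * c) * l"
    using assms(2,3) mult_mono[of 1 "1 + 2 * c" 1 l] by simp
  have rho_sq: "2 * ln (real n) - (1 + 2 * c) * l \<le> rho_rad c n ^ 2"
    using sqrt_le_rho_rad[OF assms(2)] assms(3,4) sqrt_le_D unfolding l_def by blast
  then show rho_sq_ge: "ln (real n) \<le> rho_rad c n ^ 2"
    using assms(4) by linarith
  have "1 \<le> sqrt (2 * ln (real n) - (1 + 2 * c) * l)"
    using \<open>1 \<le> (1 + 2 * c) * l\<close> assms(4) by simp
  then show rho_ge_1: "1 \<le> rho_rad c n"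
    using sqrt_le_rho_rad[OF assms(2)] assms(3,4) unfolding l_def by (meson order_trans)
  have "0 \<le> 5 * c1^2"
    by simp
  note r_bounds = shifted_radius_bounds[OF rho_ge_1 this order.trans[OF assms(6) rho_sq_ge],
      folded r_rad_def]
  show "0 \<le> r_rad c c1 n" "r_rad c c1 n \<le> rho_rad c n" "rho_rad c n - r_rad c c1 n \<le> 5 * c1^2"
    using r_bounds(1-3) by simp_all
  have c_l: "- \<bar>c0\<bar> * l \<le> c0 * l" "c0 * l \<le> \<bar>c0\<bar> * l" "c1^2 \<le> c1^2 * l"
    using assms(3) mult_left_mono[of 1 l "c1^2"] mult_right_mono[of "- \<bar>c0\<bar>" c0 l]
      mult_right_mono[of c0 "\<bar>c0\<bar>" l] by auto
  moreover have "R_rad c0 n ^ 2 = 2 * ln (real n) + c0 * l"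
    using c_l(1,2) assms(5) by (intro R_rad_sq[of n c0, folded l_def]) linarith
  moreover have "(\<bar>c0\<bar> + 1 + 2 * c + 10 * c1^2) * l = \<bar>c0\<bar> * l + (1 + 2 * c) * l + 10 * (c1^2 * l)"
    by (simp add: algebra_simps)
  ultimately show "R_rad c0 n ^ 2 - r_rad c c1 n ^ 2 \<le> (\<bar>c0\<bar> + 1 + 2 * c + 10 * c1^2) * l"
    using rho_sq r_bounds(4) by linarith
qed

lemma degree_annulus_le_ln_ln_powr:
  fixes Y :: "(real^'d) set" and c0 c c1 :: real and n :: nat
  defines "l \<equiv> ln (ln (real n))"
    and "A \<equiv> 6 * sqrt (\<bar>c0\<bar> + 1 + 2 * c + 10 * c1^2) + 10 * c1^2 + 4 * c1"
  assumes c: "0 < c" and c1: "0 < c1"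
    and l: "1 \<le> l" "(1 + 2 * c) * l \<le> ln (real n)" "\<bar>c0\<bar> * l \<le> ln (real n)"
      "5 * c1^2 \<le> ln (real n)" "(2 * real CARD('d) * A)^2 * l \<le> ln (real n)"
    and Y: "finite Y" "maximal_separated (rho_rad c n) (2 * c1) Y" "y \<in> Y"
  shows "real (degree (annulus (R_rad c0 n) (r_rad c c1 n)) Y y)
           \<le> (4 * real CARD('d)^2 * A / c1 + 3) ^ (CARD('d) - 1) * l powr ((real CARD('d) - 1) / 2)"
proof -
  define L where "L = A * sqrt l"
  have "0 \<le> A"
    using c c1 by (simp add: A_def)
  then have "0 \<le> L"
    using l(1) by (simp add: L_def)
  note radii = annulus_radii_estimates[of c n c0 c1, folded l_def, OF c l(1-4)]
  have "sqrt (R_rad c0 n ^ 2 - r_rad c c1 n ^ 2) \<le> sqrt (\<bar>c0\<bar> + 1 + 2 * c + 10 * c1^2) * sqrt l"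
    using radii(6) by (simp add: real_sqrt_mult[symmetric])
  moreover have "10 * c1^2 + 4 * c1 \<le> (10 * c1^2 + 4 * c1) * sqrt l"
    using l(1) c1 mult_left_mono[of 1 "sqrt l" "10 * c1^2 + 4 * c1"] by simp
  ultimately have width: "6 * sqrt (R_rad c0 n ^ 2 - r_rad c c1 n ^ 2)
      + 2 * (rho_rad c n - r_rad c c1 n) + 2 * (2 * c1) \<le> L"
    using radii(5) by (simp add: L_def A_def algebra_simps)
  have "(2 * real CARD('d) * L)^2 \<le> rho_rad c n ^ 2"
    using l(1,5) radii(1) by (simp add: L_def power_mult_distrib)
  then have "2 * real CARD('d) * L \<le> rho_rad c n"
    by (rule power2_le_imp_le) (use radii(2) in auto)
  then have "real (degree (annulus (R_rad c0 n) (r_rad c c1 n)) Y y)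
      \<le> (8 * real CARD('d)^2 * L / (2 * c1) + 3) ^ (CARD('d) - 1)"
    using Y radii(2-4) width c1 \<open>0 \<le> L\<close> by (intro degree_annulus_le) auto
  also have "\<dots> \<le> ((4 * real CARD('d)^2 * A / c1 + 3) * sqrt l) ^ (CARD('d) - 1)"
  proof (rule power_mono)
    have "3 \<le> 3 * sqrt l"
      using l(1) by simp
    then show "8 * real CARD('d)^2 * L / (2 * c1) + 3 \<le> (4 * real CARD('d)^2 * A / c1 + 3) * sqrt l"
      using c1 by (simp add: L_def field_simps)
  qed (use \<open>0 \<le> L\<close> c1 in simp)
  also have "\<dots> = (4 * real CARD('d)^2 * A / c1 + 3) ^ (CARD('d) - 1)
      * l powr ((real CARD('d) - 1) / 2)"
    using l(1) by (simp add: power_mult_distrib powr_half_sqrt[symmetric] powr_power of_nat_diff)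
  finally show ?thesis .
qed

theorem theorem10p2:
  fixes c0 c c1 :: real
  assumes "CARD('d::finite) \<ge> 2" and "c > 0" and "c1 > 0"
  shows "\<exists>C N. \<forall>n\<ge>N. \<forall>Y :: (real^'d) set.
           finite Y \<and> maximal_separated (rho_rad c n) (2 * c1) Y \<longrightarrow>
           (\<forall>y\<in>Y. real (degree (annulus (R_rad c0 n) (r_rad c c1 n)) Y y)
                   \<le> C * (ln (ln (real n))) powr ((real CARD('d) - 1) / 2))"
proof -
  define A where "A = 6 * sqrt (\<bar>c0\<bar> + 1 + 2 * c + 10 * c1^2) + 10 * c1^2 + 4 * c1"
  define C where "C = (4 * real CARD('d)^2 * A / c1 + 3) ^ (CARD('d) - 1)"
  have "eventually (\<lambda>n. 1 \<le> ln (ln (real n)) \<and> (1 + 2 * c) * ln (ln (real n)) \<le> ln (real n) \<and>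
      \<bar>c0\<bar> * ln (ln (real n)) \<le> ln (real n) \<and> 5 * c1^2 \<le> ln (real n) \<and>
      (2 * real CARD('d) * A)^2 * ln (ln (real n)) \<le> ln (real n)) sequentially"
    (is "eventually ?large _")
    by (intro eventually_conj) real_asymp+
  then obtain N where N: "\<And>n. n \<ge> N \<Longrightarrow> ?large n"
    unfolding eventually_sequentially by blast
  show ?thesis
  proof (intro exI allI impI ballI)
    fix n :: nat and Y :: "(real^'d) set" and y
    assume "N \<le> n" and "finite Y \<and> maximal_separated (rho_rad c n) (2 * c1) Y" and "y \<in> Y"
    with N[of n] assms(2,3) show "real (degree (annulus (R_rad c0 n) (r_rad c c1 n)) Y y)
        \<le> C * ln (ln (real n)) powr ((real CARD('d) - 1) / 2)"
      unfolding C_def by (intro degree_annulus_le_ln_ln_powr[of c c1 n c0, folded A_def]) auto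
  qed
qed

end
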